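(* Under the assumptions below, the entries of the bidiagonal factors of $\mathscr T_N$ are given by \[ U_{b,n}=-\frac{\tau^B_{b-1,n}\,\tau^B_{b,n+1}}{\tau^B_{b-1,n+1}\,\tau^B_{b,n}},\qquad b\in\{1,\dots,q\},\ n\in\{0,1,\dots,N-b-1\}, \] \[ L_{a,n+1}=-\frac{\tau^A_{a-1,n+2}\,\tau^A_{a,n}}{\tau^A_{a-1,n+1}\,\tau^A_{a,n+1}},\qquad a\in\{1,\dots,p\},\ n\in\{0,1,\dots,N-a-1\}. \]
   Context: Let $p,q\in\mathbb N$ and let $\mu=(\mu_{i,j})$ be a $q\times p$ matrix of measures on $\mathbb R$. For $r,M\in\mathbb N$ let $X^{[M]}_{[r]}(x)$ be the $M\times r$ matrix of monomials whose row $i$ ($i=0,1,\dots,M-1$) is $x^{\lfloor i/r\rfloor}e_{(i \bmod r)+1}^\top$ (i.e. the first $M$ rows of the block column $I_r, xI_r, x^2I_r,\dots$). For $N,M\in\mathbb N$ put $\mathscr M^{[N,M]}=\int X^{[N]}_{[q]}(x)\,\mathrm d\mu(x)\,\big(X^{[M]}_{[p]}(x)\big)^\top$ and $\mathscr M_N=\mathscr M^{[N,N]}$. Assume $\mathscr M_N$ has a Gauss--Borel factorization $\mathscr M_N=\mathscr L_N^{-1}\mathscr U_N^{-1}$ with $\mathscr L_N$ lower unitriangular and $\mathscr U_N$ nonsingular upper triangular. Define the polynomial matrices $B^{[N]}=\mathscr L_N X^{[N]}_{[q]}$ (an $N\times q$ matrix with entries $B^{(j)}_n(x)$, row $n\in\{0,\dots,N-1\}$,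 column $j\in\{1,\dots,q\}$) and $A^{[N]}=\big(X^{[N]}_{[p]}\big)^\top\mathscr U_N$ (a $p\times N$ matrix with entries $A^{(i)}_n(x)$, row $i\in\{1,\dots,p\}$, column $n$). Let $\Lambda^{[N,N+q]}_{[q]}$ be the $N\times(N+q)$ matrix with entries $\delta_{j,i+q}$, and define the banded recursion matrix (with $q$ superdiagonals and $p$ subdiagonals) $\mathscr T_N=\mathscr L_N\Lambda^{[N,N+q]}_{[q]}\mathscr M^{[N+q,N]}\mathscr U_N$. For $r\in\mathbb N$ let $\mathfrak X_{[r,1]}(x)$ be the $r\times r$ matrix whose first $r-1$ rows are $\begin{bmatrix}0_{(r-1)\times1} & I_{r-1}\end{bmatrix}$ and whose last row is $\begin{bmatrix}x&0&\cdots&0\end{bmatrix}$. Define Christoffel-perturbed measures $\mathrm d\mu_{(n,m)}=\mathfrak X_{[q,1]}^n\,\mathrm d\mu\,\big(\mathfrak X_{[p,1]}^m\big)^\top$, their moment matrices $\mathscr M_{N,(n,m)}=\int X^{[N]}_{[q]}\,\mathrm d\mu_{(n,m)}\,(X^{[N]}_{[p]})^\top$, and assume each $\mathscr M_{N,(b,0)}$, $b\in\{1,\dots,q\}$, and $\mathscr M_{N,(0,a)}$, $a\in\{1,\dots,p\}$, admits a Gauss--Borel factorization $\mathscr M_{N,(n,m)}=\mathscr L_{N,(n,m)}^{-1}\mathscr U_{N,(n,m)}^{-1}$ (lower unitriangular / upper triangular). Then $\mathscr T_N=L_1\cdots L_pU_q\cdots U_1$ with $U_b=\mathscr U_{N,(b,0)}^{-1}\mathscr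 U_{N,(b-1,0)}$ upper bidiagonal with diagonal entries $U_{b,0},\dots,U_{b,N-1}$ and all superdiagonal entries equal to $1$, and $L_a=\mathscr L_{N,(0,a-1)}\mathscr L_{N,(0,a)}^{-1}$ lower bidiagonal with unit diagonal and subdiagonal entries $L_{a,1},\dots,L_{a,N-1}$. The $\tau$-determinants are \[ \tau^B_{b,n}=\det\begin{bmatrix}B^{(1)}_n(0)&\cdots&B^{(b)}_n(0)\\ \vdots&&\vdots\\ B^{(1)}_{n+b-1}(0)&\cdots&B^{(b)}_{n+b-1}(0)\end{bmatrix},\qquad \tau^A_{a,n}=\det\begin{bmatrix}A^{(1)}_{n+a-1}(0)&\cdots&A^{(1)}_n(0)\\ \vdots&&\vdots\\ A^{(a)}_{n+a-1}(0)&\cdots&A^{(a)}_n(0)\end{bmatrix}, \] with $\tau^A_{0,n}=\tau^B_{0,n}=1$; their nonvanishing is equivalent to the existence of the transformed orthogonality for $\mathrm d\mu_{(b,0)}$ and $\mathrm d\mu_{(0,a)}$. *)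

theory Defs
  imports "HOL-Analysis.Analysis" "Jordan_Normal_Form.Determinant"
begin

text \<open>Matrices are Jordan_Normal_Form matrices (type real mat) with explicit dimensions;
  all indices are 0-based.  The q x p matrix of (real, signed) measures mu on the reals is
  given through its Jordan decomposition: entry (i,j) is mup i j - mum i j, where mup i j
  and mum i j are Borel measures on the reals with finite moments of all orders.\<close>

definition signed_measure_matrix ::
  "nat \<Rightarrow> nat \<Rightarrow> (nat \<Rightarrow> nat \<Rightarrow> real measure) \<Rightarrow> (nat \<Rightarrow> nat \<Rightarrow> real measure) \<Rightarrow> bool" where
  "signed_measure_matrix q p mup mum \<longleftrightarrow>
     (\<forall>i<q. \<forall>j<p. sets (mup i j) = sets borel \<and> sets (mum i j) = sets borel \<and>
        (\<forall>k::nat. integrable (mup i j) (\<lambda>x. x ^ k) \<and> integrable (mum i j) (\<lambda>x. x ^ k)))"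

definition mint ::
  "(nat \<Rightarrow> nat \<Rightarrow> real measure) \<Rightarrow> (nat \<Rightarrow> nat \<Rightarrow> real measure) \<Rightarrow> nat \<Rightarrow> nat \<Rightarrow> (real \<Rightarrow> real) \<Rightarrow> real" where
  "mint mup mum i j f = integral\<^sup>L (mup i j) f - integral\<^sup>L (mum i j) f"

text \<open>X^{[M]}_{[r]}(x): the M x r matrix whose row i is x^(i div r) e_{(i mod r)+1}^T.\<close>
definition Xmon :: "nat \<Rightarrow> nat \<Rightarrow> real \<Rightarrow> real mat" where
  "Xmon r M x = mat M r (\<lambda>(i,j). if j = i mod r then x ^ (i div r) else 0)"

text \<open>The r x r matrix fraktur-X_{[r,1]}(x): first r-1 rows [0 | I_{r-1}], last row [x 0 ... 0].\<close>
definition Xfr :: "nat \<Rightarrow> real \<Rightarrow> real mat" where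
  "Xfr r x = mat r r (\<lambda>(i,j). if i + 1 < r then (if j = i + 1 then 1 else 0)
                                             else (if j = 0 then x else 0))"

text \<open>Moment matrix of the Christoffel perturbed measure d mu_{(n,m)}, of size N x M:
  integral of X^{[N]}_{[q]} Xfr_q^n d mu (Xfr_p^m)^T (X^{[M]}_{[p]})^T.
  moment_mat q p mup mum N M 0 0 is the moment matrix M^{[N,M]}, and
  moment_mat q p mup mum N N n m is M_{N,(n,m)}.\<close>
definition moment_mat ::
  "nat \<Rightarrow> nat \<Rightarrow> (nat \<Rightarrow> nat \<Rightarrow> real measure) \<Rightarrow> (nat \<Rightarrow> nat \<Rightarrow> real measure)
    \<Rightarrow> nat \<Rightarrow> nat \<Rightarrow> nat \<Rightarrow> nat \<Rightarrow> real mat" where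
  "moment_mat q p mup mum N M n m = mat N M (\<lambda>(r,s).
     \<Sum>k<q. \<Sum>l<p. mint mup mum k l
        (\<lambda>x. (Xmon q N x * (Xfr q x ^\<^sub>m n)) $$ (r,k) * (Xmon p M x * (Xfr p x ^\<^sub>m m)) $$ (s,l)))"

definition minv :: "real mat \<Rightarrow> real mat" where
  "minv A = (THE B. B \<in> carrier_mat (dim_row A) (dim_row A) \<and>
                    A * B = 1\<^sub>m (dim_row A) \<and> B * A = 1\<^sub>m (dim_row A))"

definition lower_unitriangular :: "real mat \<Rightarrow> bool" where
  "lower_unitriangular L \<longleftrightarrow>
     (\<forall>i<dim_row L. L $$ (i,i) = 1 \<and> (\<forall>j. i < j \<and> j < dim_col L \<longrightarrow> L $$ (i,j) = 0))"

definition gauss_borel :: "nat \<Rightarrow> real mat \<Rightarrow> real mat \<Rightarrow> real mat \<Rightarrow> bool" where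
  "gauss_borel N M L U \<longleftrightarrow>
     L \<in> carrier_mat N N \<and> U \<in> carrier_mat N N \<and> lower_unitriangular L \<and>
     upper_triangular U \<and> invertible_mat U \<and> M = minv L * minv U"

text \<open>B^{[N]}(x) = L_N X^{[N]}_{[q]}(x) (N x q, entry (n,j-1) is B^{(j)}_n(x)) and
  A^{[N]}(x) = (X^{[N]}_{[p]}(x))^T U_N (p x N, entry (i-1,n) is A^{(i)}_n(x)).\<close>
definition Bmat :: "nat \<Rightarrow> nat \<Rightarrow> real mat \<Rightarrow> real \<Rightarrow> real mat" where
  "Bmat q N L x = L * Xmon q N x"

definition Amat :: "nat \<Rightarrow> nat \<Rightarrow> real mat \<Rightarrow> real \<Rightarrow> real mat" where
  "Amat p N U x = transpose_mat (Xmon p N x) * U"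

text \<open>tau determinants (the 0 x 0 determinant is 1).\<close>
definition tauB :: "nat \<Rightarrow> nat \<Rightarrow> real mat \<Rightarrow> nat \<Rightarrow> nat \<Rightarrow> real" where
  "tauB q N L b n = det (mat b b (\<lambda>(i,j). Bmat q N L 0 $$ (n + i, j)))"

definition tauA :: "nat \<Rightarrow> nat \<Rightarrow> real mat \<Rightarrow> nat \<Rightarrow> nat \<Rightarrow> real" where
  "tauA p N U a n = det (mat a a (\<lambda>(i,j). Amat p N U 0 $$ (i, n + a - 1 - j)))"

end

theory Submission
  imports Defs
begin

(* The Christoffel perturbation by fraktur-X^b on the left shifts the rows of the moment matrix
   by b, and the one on the right shifts its columns, so all moment matrices involved are
   N x N sections of one block-Hankel array, taken b rows or a columns further on.
   For M = L^-1 U^-1 the diagonal entries of U are ratios of consecutive leading minors of M.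
   Multiplying L by the first n columns of M bordered with b unit columns gives a block
   triangular matrix, because L M = U^-1 is upper triangular; comparing determinants shows
   that the b x b block of L starting at row n is (-1)^(nb) times the ratio of the leading
   n x n minors of the row-shifted array and of M.  Dually, the a x a block of U starting at
   column n is a signed ratio of leading minors of the column-shifted array and of M.
   At x = 0 the tau determinants are exactly these blocks (tau^A up to the sign of a column
   reversal), so both sides of each identity become the same quotient of leading minors. *)

lemma index_mult_mat_sum:
  fixes A B :: "'a :: comm_semiring_0 mat"
  assumes "A \<in> carrier_mat n m" "B \<in> carrier_mat m k" "i < n" "j < k"
  shows "(A * B) $$ (i,j) = (\<Sum>t<m. A $$ (i,t) * B $$ (t,j))"
  using assms by (auto simp: scalar_prod_def lessThan_atLeast0 intro!: sum.cong)

lemma sum_lessThan_eq_single: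
  fixes f :: "nat \<Rightarrow> 'a :: comm_monoid_add"
  assumes "t0 < m" "\<And>t. t < m \<Longrightarrow> t \<noteq> t0 \<Longrightarrow> f t = 0"
  shows "(\<Sum>t<m. f t) = f t0"
  using assms by (subst sum.mono_neutral_right[of "{..<m}" "{t0}"]) auto

lemma minv_inverse:
  assumes inv: "invertible_mat A" and A: "A \<in> carrier_mat n n"
  shows "minv A \<in> carrier_mat n n" "A * minv A = 1\<^sub>m n" "minv A * A = 1\<^sub>m n"
proof -
  from inv A obtain B where AB: "A * B = 1\<^sub>m n" and BA: "B * A = 1\<^sub>m (dim_row B)"
    unfolding invertible_mat_def inverts_mat_def by auto
  have "dim_col B = n" using arg_cong[OF AB, of dim_col] by simp
  moreover have "dim_row B = n" using arg_cong[OF BA, of dim_col] A by simp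
  ultimately have B: "B \<in> carrier_mat n n" by blast
  have unique: "X = B" if "X \<in> carrier_mat n n" "X * A = 1\<^sub>m n" for X
  proof -
    have "X = X * (A * B)" using AB that(1) by simp
    also have "\<dots> = (X * A) * B" using that(1) A B by simp
    finally show ?thesis using that(2) B by simp
  qed
  have "minv A = B"
    unfolding minv_def
  proof (rule the_equality)
    show "B \<in> carrier_mat (dim_row A) (dim_row A) \<and>
        A * B = 1\<^sub>m (dim_row A) \<and> B * A = 1\<^sub>m (dim_row A)"
      using A B AB BA by simp
  qed (use A unique in auto)
  then show "minv A \<in> carrier_mat n n" "A * minv A = 1\<^sub>m n" "minv A * A = 1\<^sub>m n"
    using B AB BA by auto
qed

lemma invertible_mat_if_det_nonzero:
  fixes A :: "'a :: field mat"
  assumes A: "A \<in> carrier_mat n n" and "det A \<noteq> 0"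
  shows "invertible_mat A"
proof -
  from det_non_zero_imp_unit[OF assms, of undefined]
  obtain B where "B \<in> carrier_mat n n" "B * A = 1\<^sub>m n" "A * B = 1\<^sub>m n"
    unfolding Units_def ring_mat_def by auto
  then show ?thesis
    using A unfolding invertible_mat_def inverts_mat_def square_mat.simps by auto
qed

lemma upper_triangular_left_inverse:
  fixes U V :: "'a :: field mat"
  assumes U: "U \<in> carrier_mat n n" "upper_triangular U"
    and nz: "\<And>i. i < n \<Longrightarrow> U $$ (i,i) \<noteq> 0"
    and V: "V \<in> carrier_mat n n" and VU: "V * U = 1\<^sub>m n"
  shows "upper_triangular V" and "\<And>i. i < n \<Longrightarrow> V $$ (i,i) * U $$ (i,i) = 1"
proof -
  have U_below: "U $$ (i,j) = 0" if "j < i" "i < n" for i j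
    using upper_triangularD[OF U(2) that(1)] U(1) that(2) by simp
  have V_below: "V $$ (i,j) = 0" if "j < i" "i < n" for i j
    using that(1)
  proof (induction j rule: less_induct)
    case (less j)
    have "0 = (V * U) $$ (i,j)" using VU less.prems that(2) by simp
    also have "\<dots> = (\<Sum>t<n. V $$ (i,t) * U $$ (t,j))"
      using index_mult_mat_sum[OF V U(1)] less.prems that(2) by simp
    also have "\<dots> = V $$ (i,j) * U $$ (j,j)"
    proof (rule sum_lessThan_eq_single)
      fix t assume "t < n" "t \<noteq> j"
      then show "V $$ (i,t) * U $$ (t,j) = 0"
        using less.IH[of t] U_below[of j t] less.prems by (cases "t < j") auto
    qed (use less.prems that(2) in simp)
    finally show ?case using nz[of j] less.prems that(2) by simp
  qed
  then show "upper_triangular V" using V by auto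
  fix i assume i: "i < n"
  have "1 = (V * U) $$ (i,i)" using VU i by simp
  also have "\<dots> = (\<Sum>t<n. V $$ (i,t) * U $$ (t,i))" using index_mult_mat_sum[OF V U(1) i i] .
  also have "\<dots> = V $$ (i,i) * U $$ (i,i)"
  proof (rule sum_lessThan_eq_single[OF i])
    fix t assume "t < n" "t \<noteq> i"
    then show "V $$ (i,t) * U $$ (t,i) = 0"
      using V_below[of t i] U_below[of i t] i by (cases "t < i") auto
  qed
  finally show "V $$ (i,i) * U $$ (i,i) = 1" by simp
qed

lemma lower_unitriangularD:
  assumes "lower_unitriangular L" "L \<in> carrier_mat N N"
  shows "\<And>i j. i < j \<Longrightarrow> j < N \<Longrightarrow> L $$ (i,j) = 0"
  using assms unfolding lower_unitriangular_def by auto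

lemma upper_triangular_mult_diag:
  fixes A B :: "'a :: comm_semiring_0 mat"
  assumes A: "A \<in> carrier_mat N N" "upper_triangular A"
    and B: "B \<in> carrier_mat N N" "upper_triangular B" and n: "n < N"
  shows "(A * B) $$ (n,n) = A $$ (n,n) * B $$ (n,n)"
proof -
  have "(A * B) $$ (n,n) = (\<Sum>t<N. A $$ (n,t) * B $$ (t,n))"
    by (rule index_mult_mat_sum[OF A(1) B(1) n n])
  also have "\<dots> = A $$ (n,n) * B $$ (n,n)"
  proof (rule sum_lessThan_eq_single[OF n])
    fix t assume "t < N" "t \<noteq> n"
    then show "A $$ (n,t) * B $$ (t,n) = 0"
      using upper_triangularD[OF A(2), of t n] upper_triangularD[OF B(2), of n t] A(1) B(1) n
      by (cases "t < n") auto
  qed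
  finally show ?thesis .
qed

definition leading_submatrix :: "nat \<Rightarrow> 'a mat \<Rightarrow> 'a mat" where
  "leading_submatrix k A = mat k k (\<lambda>(i,j). A $$ (i,j))"

lemma leading_submatrix_carrier [simp]: "leading_submatrix k A \<in> carrier_mat k k"
  unfolding leading_submatrix_def by simp

lemma dim_leading_submatrix [simp]:
  "dim_row (leading_submatrix k A) = k" "dim_col (leading_submatrix k A) = k"
  unfolding leading_submatrix_def by simp_all

lemma leading_submatrix_index [simp]:
  "i < k \<Longrightarrow> j < k \<Longrightarrow> leading_submatrix k A $$ (i,j) = A $$ (i,j)"
  unfolding leading_submatrix_def by simp

lemma leading_submatrix_mat: "k \<le> N \<Longrightarrow> leading_submatrix k (mat N N f) = mat k k f"
  by (rule eq_matI) auto

lemma leading_submatrix_full: "A \<in> carrier_mat N N \<Longrightarrow> leading_submatrix N A = A"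
  by (rule eq_matI) auto

lemma leading_submatrix_one: "k \<le> N \<Longrightarrow> leading_submatrix k (1\<^sub>m N) = 1\<^sub>m k"
  by (rule eq_matI) auto

lemma index_mult_leading_submatrix:
  fixes A B :: "'a :: comm_semiring_0 mat"
  assumes "i < k" "j < k"
  shows "(leading_submatrix k A * leading_submatrix k B) $$ (i,j) = (\<Sum>t<k. A $$ (i,t) * B $$ (t,j))"
  using index_mult_mat_sum[OF leading_submatrix_carrier leading_submatrix_carrier assms, of A B]
  by (simp add: assms)

lemma leading_submatrix_mult_lower:
  fixes L M :: "'a :: comm_semiring_0 mat"
  assumes L: "L \<in> carrier_mat N N" and M: "M \<in> carrier_mat N N" and k: "k \<le> N"
    and lower: "\<And>i j. i < j \<Longrightarrow> j < N \<Longrightarrow> L $$ (i,j) = 0"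
  shows "leading_submatrix k (L * M) = leading_submatrix k L * leading_submatrix k M"
proof (rule eq_matI)
  fix i j assume "i < dim_row (leading_submatrix k L * leading_submatrix k M)"
    "j < dim_col (leading_submatrix k L * leading_submatrix k M)"
  then have i: "i < k" and j: "j < k" by auto
  have "leading_submatrix k (L * M) $$ (i,j) = (\<Sum>t<N. L $$ (i,t) * M $$ (t,j))"
    using index_mult_mat_sum[OF L M] i j k by simp
  also have "\<dots> = (\<Sum>t<k. L $$ (i,t) * M $$ (t,j))"
    using lower i k by (intro sum.mono_neutral_right) auto
  finally show "leading_submatrix k (L * M) $$ (i,j)
      = (leading_submatrix k L * leading_submatrix k M) $$ (i,j)"
    unfolding index_mult_leading_submatrix[OF i j] .
qed auto

lemma leading_submatrix_mult_upper:
  fixes M U :: "'a :: comm_semiring_0 mat"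
  assumes M: "M \<in> carrier_mat N N" and U: "U \<in> carrier_mat N N" and k: "k \<le> N"
    and ut: "upper_triangular U"
  shows "leading_submatrix k (M * U) = leading_submatrix k M * leading_submatrix k U"
proof (rule eq_matI)
  fix i j assume "i < dim_row (leading_submatrix k M * leading_submatrix k U)"
    "j < dim_col (leading_submatrix k M * leading_submatrix k U)"
  then have i: "i < k" and j: "j < k" by auto
  have "leading_submatrix k (M * U) $$ (i,j) = (\<Sum>t<N. M $$ (i,t) * U $$ (t,j))"
    using index_mult_mat_sum[OF M U] i j k by simp
  also have "\<dots> = (\<Sum>t<k. M $$ (i,t) * U $$ (t,j))"
    using upper_triangularD[OF ut] U j k by (intro sum.mono_neutral_right) auto
  finally show "leading_submatrix k (M * U) $$ (i,j)
      = (leading_submatrix k M * leading_submatrix k U) $$ (i,j)"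
    unfolding index_mult_leading_submatrix[OF i j] .
qed auto

lemma det_leading_submatrix_upper:
  fixes U :: "'a :: comm_ring_1 mat"
  assumes U: "U \<in> carrier_mat N N" and ut: "upper_triangular U" and k: "k \<le> N"
  shows "det (leading_submatrix k U) = (\<Prod>i<k. U $$ (i,i))"
proof -
  have "upper_triangular (leading_submatrix k U)"
    using upper_triangularD[OF ut] U k by (intro upper_triangularI) auto
  then show ?thesis
    by (subst det_upper_triangular[of _ k]) (auto simp: prod_list_diag_prod lessThan_atLeast0)
qed

lemma det_leading_submatrix_lower_unitriangular:
  fixes L :: "real mat"
  assumes "L \<in> carrier_mat N N" "lower_unitriangular L" "k \<le> N"
  shows "det (leading_submatrix k L) = 1"
  using assms by (subst det_lower_triangular[of k])
    (auto simp: prod_list_diag_prod lower_unitriangular_def intro!: prod.neutral)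

section \<open>Gauss--Borel factorizations\<close>

lemma gauss_borel_L:
  assumes "gauss_borel N M L U"
  shows "L \<in> carrier_mat N N" "lower_unitriangular L" "invertible_mat L"
proof -
  show L: "L \<in> carrier_mat N N" and lu: "lower_unitriangular L"
    using assms unfolding gauss_borel_def by auto
  have "det L = 1"
    using det_leading_submatrix_lower_unitriangular[OF L lu order.refl]
    by (simp add: leading_submatrix_full[OF L])
  then show "invertible_mat L" using invertible_mat_if_det_nonzero[OF L] by simp
qed

lemma gauss_borel_U:
  assumes "gauss_borel N M L U"
  shows "U \<in> carrier_mat N N" "upper_triangular U" "invertible_mat U"
    "\<And>i. i < N \<Longrightarrow> U $$ (i,i) \<noteq> 0"
proof -
  show U: "U \<in> carrier_mat N N" and ut: "upper_triangular U" and inv: "invertible_mat U"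
    using assms unfolding gauss_borel_def by auto
  have "det U * det (minv U) = 1"
    using minv_inverse[OF inv U] det_mult[OF U, of "minv U"] by simp
  then have "det U \<noteq> 0" by auto
  then show "\<And>i. i < N \<Longrightarrow> U $$ (i,i) \<noteq> 0"
    using det_leading_submatrix_upper[OF U ut order.refl] by (simp add: leading_submatrix_full[OF U])
qed

lemma gauss_borel_minv_U:
  assumes "gauss_borel N M L U"
  shows "minv U \<in> carrier_mat N N" "upper_triangular (minv U)"
    "\<And>i. i < N \<Longrightarrow> minv U $$ (i,i) = 1 / U $$ (i,i)"
proof -
  note U = gauss_borel_U[OF assms]
  note V = minv_inverse[OF U(3,1)]
  show "minv U \<in> carrier_mat N N" by (fact V(1))
  show "upper_triangular (minv U)"
    by (rule upper_triangular_left_inverse(1)[OF U(1,2,4) V(1,3)])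
  show "minv U $$ (i,i) = 1 / U $$ (i,i)" if "i < N" for i
    using upper_triangular_left_inverse(2)[OF U(1,2,4) V(1,3) that] U(4)[OF that]
    by (simp add: eq_divide_eq)
qed

lemma gauss_borel_minv_L:
  assumes "gauss_borel N M L U"
  shows "minv L \<in> carrier_mat N N" "lower_unitriangular (minv L)"
proof -
  note L = gauss_borel_L[OF assms]
  note V = minv_inverse[OF L(3) L(1)]
  show "minv L \<in> carrier_mat N N" by (fact V(1))
  have Lt: "transpose_mat L \<in> carrier_mat N N" "upper_triangular (transpose_mat L)"
    "\<And>i. i < N \<Longrightarrow> transpose_mat L $$ (i,i) \<noteq> 0"
    using L(1,2) unfolding lower_unitriangular_def by auto
  have "transpose_mat (minv L) * transpose_mat L = 1\<^sub>m N"
    using arg_cong[OF V(2), of transpose_mat] transpose_mult[OF L(1) V(1)] by simp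
  note Vt = upper_triangular_left_inverse[OF Lt _ this]
  show "lower_unitriangular (minv L)"
    using Vt(1) Vt(2) V(1) L(1,2) unfolding lower_unitriangular_def
    by (auto simp: upper_triangular_def)
qed

lemma gauss_borel_M:
  assumes "gauss_borel N M L U"
  shows "M \<in> carrier_mat N N" "L * M = minv U" "M * U = minv L"
proof -
  have M: "M = minv L * minv U" using assms unfolding gauss_borel_def by simp
  note L = gauss_borel_L[OF assms] and U = gauss_borel_U[OF assms]
  note VL = minv_inverse[OF L(3,1)] and VU = minv_inverse[OF U(3,1)]
  show "M \<in> carrier_mat N N" unfolding M using VL VU by simp
  show "L * M = minv U"
    unfolding M using VL VU L(1) by (simp add: assoc_mult_mat[symmetric, of L N N "minv L"])
  show "M * U = minv L"
    unfolding M using VL VU U(1) by (simp add: assoc_mult_mat[of "minv L" N N])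
qed

lemma gauss_borel_leading_minor:
  assumes gb: "gauss_borel N M L U" and k: "k \<le> N"
  shows "det (leading_submatrix k M) * (\<Prod>i<k. U $$ (i,i)) = 1"
proof -
  note L = gauss_borel_L[OF gb] and U = gauss_borel_U[OF gb] and M = gauss_borel_M[OF gb]
  note L_lower = lower_unitriangularD[OF L(2,1)]
  have "L * M * U = 1\<^sub>m N"
    using M(2) minv_inverse(3)[OF U(3,1)] by simp
  have "1\<^sub>m k = leading_submatrix k (1\<^sub>m N :: real mat)" by (rule leading_submatrix_one[OF k, symmetric])
  also have "\<dots> = leading_submatrix k (L * M * U)" using \<open>L * M * U = 1\<^sub>m N\<close> by simp
  also have "\<dots> = leading_submatrix k L * leading_submatrix k M * leading_submatrix k U"
    using leading_submatrix_mult_upper[OF _ U(1) k U(2), of "L * M"]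
      leading_submatrix_mult_lower[OF L(1) M(1) k L_lower] L(1) M(1) by simp
  finally have
    "det (leading_submatrix k L) * det (leading_submatrix k M) * det (leading_submatrix k U) = 1"
    by (metis det_mult det_one leading_submatrix_carrier mult_carrier_mat)
  then show ?thesis
    using det_leading_submatrix_lower_unitriangular[OF L(1,2) k] det_leading_submatrix_upper[OF U(1,2) k]
    by simp
qed

lemma gauss_borel_leading_minor_nonzero:
  assumes "gauss_borel N M L U" "k \<le> N"
  shows "det (leading_submatrix k M) \<noteq> 0"
  using gauss_borel_leading_minor[OF assms] by auto

lemma gauss_borel_diag:
  assumes gb: "gauss_borel N M L U" and n: "n < N"
  shows "U $$ (n,n) = det (leading_submatrix n M) / det (leading_submatrix (Suc n) M)"
proof -
  let ?P = "\<Prod>i<n. U $$ (i,i)"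
  have P: "det (leading_submatrix n M) * ?P = 1"
    using gauss_borel_leading_minor[OF gb, of n] n by simp
  have "det (leading_submatrix (Suc n) M) * U $$ (n,n) * ?P = 1"
    using gauss_borel_leading_minor[OF gb, of "Suc n"] n by (simp add: ac_simps)
  with P have "det (leading_submatrix (Suc n) M) * U $$ (n,n) = det (leading_submatrix n M)"
    by (metis mult_cancel_right mult_zero_right zero_neq_one)
  then show ?thesis
    using gauss_borel_leading_minor_nonzero[OF gb, of "Suc n"] n by (simp add: field_simps)
qed

section \<open>Block minors of the triangular factors\<close>

definition col_bordered :: "(nat \<Rightarrow> nat \<Rightarrow> 'a :: {zero,one}) \<Rightarrow> nat \<Rightarrow> nat \<Rightarrow> 'a mat" where
  "col_bordered g n b = mat (n+b) (n+b) (\<lambda>(i,j). if j < n then g i j else if i = j - n then 1 else 0)"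

definition row_bordered :: "(nat \<Rightarrow> nat \<Rightarrow> 'a :: {zero,one}) \<Rightarrow> nat \<Rightarrow> nat \<Rightarrow> 'a mat" where
  "row_bordered g n a = mat (n+a) (n+a) (\<lambda>(i,j). if i < n then g i j else if j = i - n then 1 else 0)"

lemma col_bordered_carrier [simp]: "col_bordered g n b \<in> carrier_mat (n+b) (n+b)"
  by (simp add: col_bordered_def)

lemma row_bordered_carrier [simp]: "row_bordered g n a \<in> carrier_mat (n+a) (n+a)"
  by (simp add: row_bordered_def)

lemma det_col_bordered:
  fixes g :: "nat \<Rightarrow> nat \<Rightarrow> 'a :: idom"
  shows "det (col_bordered g n b) = (-1)^(b*n) * det (mat n n (\<lambda>(i,j). g (i+b) j))"
proof -
  let ?C = "mat (b+n) (b+n) (\<lambda>(i,j). if j < n then g i j else if i = j - n then 1 else 0)"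
  have "det ?C = (-1)^(b*n) * det (mat (b+n) (b+n) (\<lambda>(i,j). ?C $$ (i, if j < b then j + n else j - b)))"
    by (rule det_swap_cols) simp
  also have "mat (b+n) (b+n) (\<lambda>(i,j). ?C $$ (i, if j < b then j + n else j - b))
     = four_block_mat (1\<^sub>m b) (mat b n (\<lambda>(i,j). g i j)) (0\<^sub>m n b) (mat n n (\<lambda>(i,j). g (i+b) j))"
    by (rule eq_matI) auto
  also have "det \<dots> = det (mat n n (\<lambda>(i,j). g (i+b) j))"
    by (subst det_four_block_mat_lower_left_zero) auto
  finally show ?thesis by (simp add: col_bordered_def add.commute)
qed

lemma det_row_bordered:
  fixes g :: "nat \<Rightarrow> nat \<Rightarrow> 'a :: idom"
  shows "det (row_bordered g n a) = (-1)^(a*n) * det (mat n n (\<lambda>(i,j). g i (j+a)))"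
proof -
  have "row_bordered g n a = transpose_mat (col_bordered (\<lambda>i j. g j i) n a)"
    unfolding row_bordered_def col_bordered_def by (rule eq_matI) auto
  moreover have "mat n n (\<lambda>(i,j). g i (j+a)) = transpose_mat (mat n n (\<lambda>(i,j). g j (i+a)))"
    by (rule eq_matI) auto
  ultimately show ?thesis
    using det_col_bordered[of "\<lambda>i j. g j i" n a]
    by (simp add: det_transpose[OF mat_carrier] col_bordered_def)
qed

lemma gauss_borel_L_mult_col_bordered:
  fixes g :: "nat \<Rightarrow> nat \<Rightarrow> real"
  assumes gb: "gauss_borel N (mat N N (\<lambda>(i,j). g i j)) L U" and nb: "n + b \<le> N"
  shows "leading_submatrix (n+b) L * col_bordered g n b
    = four_block_mat (leading_submatrix n (minv U)) (mat n b (\<lambda>(i,j). L $$ (i,j)))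
        (0\<^sub>m b n) (mat b b (\<lambda>(i,j). L $$ (n+i, j)))" (is "_ * ?C = ?B")
proof (rule eq_matI)
  note L = gauss_borel_L[OF gb] and M = gauss_borel_M[OF gb]
  note L_lower = lower_unitriangularD[OF L(2,1)]
  fix i j assume "i < dim_row ?B" "j < dim_col ?B"
  then have i: "i < n + b" and j: "j < n + b" by auto
  have prod: "(leading_submatrix (n+b) L * ?C) $$ (i,j) = (\<Sum>t<n+b. L $$ (i,t) * ?C $$ (t,j))"
    using index_mult_mat_sum[OF leading_submatrix_carrier col_bordered_carrier i j] i by simp
  show "(leading_submatrix (n+b) L * ?C) $$ (i,j) = ?B $$ (i,j)"
  proof (cases "j < n")
    case True
    have "(\<Sum>t<n+b. L $$ (i,t) * ?C $$ (t,j)) = (\<Sum>t<N. L $$ (i,t) * g t j)"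
      using True L_lower i nb by (intro sum.mono_neutral_cong_left) (auto simp: col_bordered_def)
    also have "\<dots> = minv U $$ (i,j)"
      using index_mult_mat_sum[OF L(1) mat_carrier[of N N "\<lambda>(i,j). g i j"], where i=i and j=j]
        M(2) i j nb by simp
    also have "\<dots> = ?B $$ (i,j)"
      using gauss_borel_minv_U[OF gb] True i nb by (cases "i < n") auto
    finally show ?thesis using prod by simp
  next
    case False
    have "(\<Sum>t<n+b. L $$ (i,t) * ?C $$ (t,j)) = L $$ (i, j - n)"
      using False i j by (subst sum_lessThan_eq_single[of "j - n"]) (auto simp: col_bordered_def)
    then show ?thesis using prod False i j by auto
  qed
qed (auto simp: col_bordered_def)

lemma gauss_borel_L_block_minor:
  fixes g :: "nat \<Rightarrow> nat \<Rightarrow> real"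
  assumes gb: "gauss_borel N (mat N N (\<lambda>(i,j). g i j)) L U" and nb: "n + b \<le> N"
  shows "det (mat b b (\<lambda>(i,j). L $$ (n+i, j)))
    = (-1)^(n*b) * det (mat n n (\<lambda>(i,j). g (i+b) j)) / det (mat n n (\<lambda>(i,j). g i j))"
proof -
  note L = gauss_borel_L[OF gb] and M = gauss_borel_M[OF gb]
  note L_lower = lower_unitriangularD[OF L(2,1)]
  have leading_minor: "det (mat n n (\<lambda>(i,j). g i j)) = det (leading_submatrix n (minv U))"
    using leading_submatrix_mult_lower[OF L(1) M(1) _ L_lower, of n] nb M(2)
      det_leading_submatrix_lower_unitriangular[OF L(1,2), of n]
    by (simp add: det_mult[of _ n] leading_submatrix_mat)
  have "(-1)^(b*n) * det (mat n n (\<lambda>(i,j). g (i+b) j))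
      = det (leading_submatrix (n+b) L) * det (col_bordered g n b)"
    using det_col_bordered[of g n b] det_leading_submatrix_lower_unitriangular[OF L(1,2) nb] by simp
  also have "\<dots> = det (leading_submatrix n (minv U)) * det (mat b b (\<lambda>(i,j). L $$ (n+i, j)))"
    by (simp add: det_mult[of _ "n+b", symmetric] gauss_borel_L_mult_col_bordered[OF gb nb]
        det_four_block_mat_lower_left_zero[of _ n _ b])
  finally show ?thesis
    using leading_minor gauss_borel_leading_minor_nonzero[OF gb, of n] nb
    by (simp add: field_simps mult.commute leading_submatrix_mat)
qed

lemma gauss_borel_row_bordered_mult_U:
  fixes g :: "nat \<Rightarrow> nat \<Rightarrow> real"
  assumes gb: "gauss_borel N (mat N N (\<lambda>(i,j). g i j)) L U" and na: "n + a \<le> N"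
  shows "row_bordered g n a * leading_submatrix (n+a) U
    = four_block_mat (leading_submatrix n (minv L)) (0\<^sub>m n a)
        (mat a n (\<lambda>(i,j). U $$ (i,j))) (mat a a (\<lambda>(i,j). U $$ (i, n+j)))" (is "?R * _ = ?B")
proof (rule eq_matI)
  note U = gauss_borel_U[OF gb] and M = gauss_borel_M[OF gb]
  have U_below: "U $$ (t,j) = 0" if "j < t" "t < N" for t j
    using upper_triangularD[OF U(2) that(1)] U(1) that(2) by simp
  fix i j assume "i < dim_row ?B" "j < dim_col ?B"
  then have i: "i < n + a" and j: "j < n + a" by auto
  have prod: "(?R * leading_submatrix (n+a) U) $$ (i,j) = (\<Sum>t<n+a. ?R $$ (i,t) * U $$ (t,j))"
    using index_mult_mat_sum[OF row_bordered_carrier leading_submatrix_carrier i j] j by simp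
  show "(?R * leading_submatrix (n+a) U) $$ (i,j) = ?B $$ (i,j)"
  proof (cases "i < n")
    case True
    have "(\<Sum>t<n+a. ?R $$ (i,t) * U $$ (t,j)) = (\<Sum>t<N. g i t * U $$ (t,j))"
      using True U_below j na by (intro sum.mono_neutral_cong_left) (auto simp: row_bordered_def)
    also have "\<dots> = minv L $$ (i,j)"
      using index_mult_mat_sum[OF mat_carrier[of N N "\<lambda>(i,j). g i j"] U(1), where i=i and j=j]
        M(3) i j na by simp
    also have "\<dots> = ?B $$ (i,j)"
      using lower_unitriangularD[OF gauss_borel_minv_L(2,1)[OF gb]] True j na
      by (cases "j < n") auto
    finally show ?thesis using prod by simp
  next
    case False
    have "(\<Sum>t<n+a. ?R $$ (i,t) * U $$ (t,j)) = U $$ (i - n, j)"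
      using False i j by (subst sum_lessThan_eq_single[of "i - n"]) (auto simp: row_bordered_def)
    then show ?thesis using prod False i j by auto
  qed
qed (auto simp: row_bordered_def)

lemma gauss_borel_U_block_minor:
  fixes g :: "nat \<Rightarrow> nat \<Rightarrow> real"
  assumes gb: "gauss_borel N (mat N N (\<lambda>(i,j). g i j)) L U" and na: "n + a \<le> N"
  shows "det (mat a a (\<lambda>(i,j). U $$ (i, n+j)))
    = (-1)^(a*n) * det (mat n n (\<lambda>(i,j). g i (j+a))) / det (mat (n+a) (n+a) (\<lambda>(i,j). g i j))"
proof -
  note L = gauss_borel_minv_L[OF gb] and U = gauss_borel_U[OF gb]
  have diag: "(\<Prod>i<n+a. U $$ (i,i)) = 1 / det (mat (n+a) (n+a) (\<lambda>(i,j). g i j))"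
    using gauss_borel_leading_minor[OF gb na] na
    by (auto simp: leading_submatrix_mat eq_divide_eq mult.commute)
  have "(-1)^(a*n) * det (mat n n (\<lambda>(i,j). g i (j+a))) * (\<Prod>i<n+a. U $$ (i,i))
      = det (row_bordered g n a) * det (leading_submatrix (n+a) U)"
    using det_row_bordered[of g n a] det_leading_submatrix_upper[OF U(1,2) na] by simp
  also have "\<dots> = det (leading_submatrix n (minv L)) * det (mat a a (\<lambda>(i,j). U $$ (i, n+j)))"
    by (simp add: det_mult[of _ "n+a", symmetric] gauss_borel_row_bordered_mult_U[OF gb na]
        det_four_block_mat_upper_right_zero[of _ n _ a])
  also have "\<dots> = det (mat a a (\<lambda>(i,j). U $$ (i, n+j)))"
    using det_leading_submatrix_lower_unitriangular[OF L, of n] na by simp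
  finally show ?thesis by (simp add: diag)
qed

section \<open>Moment matrices of the Christoffel perturbations\<close>

lemma Xmon_mult_Xfr_power_index:
  assumes q: "q \<ge> 1" and r: "r < N" and k: "k < q"
  shows "(Xmon q N x * Xfr q x ^\<^sub>m b) $$ (r,k) = (if k = (r+b) mod q then x ^ ((r+b) div q) else 0)"
  using k
proof (induction b arbitrary: k)
  case 0
  have "Xmon q N x * Xfr q x ^\<^sub>m 0 = Xmon q N x" by (simp add: Xfr_def Xmon_def)
  then show ?case using 0 r by (simp add: Xmon_def)
next
  case (Suc b)
  have X: "Xmon q N x \<in> carrier_mat N q" and F: "Xfr q x \<in> carrier_mat q q"
    by (simp_all add: Xmon_def Xfr_def)
  define c where "c = r + b"
  have "(Xmon q N x * Xfr q x ^\<^sub>m Suc b) $$ (r,k)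
      = ((Xmon q N x * Xfr q x ^\<^sub>m b) * Xfr q x) $$ (r,k)"
    using assoc_mult_mat[OF X pow_carrier_mat[OF F] F] by simp
  also have "\<dots> = (\<Sum>j<q. (Xmon q N x * Xfr q x ^\<^sub>m b) $$ (r,j) * Xfr q x $$ (j,k))"
    using index_mult_mat_sum[OF mult_carrier_mat[OF X pow_carrier_mat[OF F]] F r Suc.prems] .
  also have "\<dots> = x ^ (c div q) * Xfr q x $$ (c mod q, k)"
    using Suc.IH q by (subst sum_lessThan_eq_single[of "c mod q"]) (auto simp: c_def)
  also have "\<dots> = (if k = Suc c mod q then x ^ (Suc c div q) else 0)"
  proof (cases "Suc (c mod q) = q")
    case True
    then have "Suc c mod q = 0" "Suc c div q = Suc (c div q)" by (simp_all add: mod_Suc div_Suc)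
    then show ?thesis using True Suc.prems q by (auto simp: Xfr_def)
  next
    case False
    then have "Suc c mod q = Suc (c mod q)" "Suc c div q = c div q" by (simp_all add: mod_Suc div_Suc)
    moreover have "Suc (c mod q) < q" using False mod_less_divisor[of q c] q by linarith
    ultimately show ?thesis using Suc.prems by (auto simp: Xfr_def)
  qed
  finally show ?case by (simp add: c_def)
qed

definition block_moment ::
  "nat \<Rightarrow> nat \<Rightarrow> (nat \<Rightarrow> nat \<Rightarrow> real measure) \<Rightarrow> (nat \<Rightarrow> nat \<Rightarrow> real measure) \<Rightarrow>
    nat \<Rightarrow> nat \<Rightarrow> real" where
  "block_moment q p mup mum r s =
     mint mup mum (r mod q) (s mod p) (\<lambda>x. x ^ (r div q) * x ^ (s div p))"

lemma moment_mat_eq_block_moment: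
  assumes q: "q \<ge> 1" and p: "p \<ge> 1"
  shows "moment_mat q p mup mum N N b a = mat N N (\<lambda>(r,s). block_moment q p mup mum (r+b) (s+a))"
proof (rule eq_matI)
  fix r s assume "r < dim_row (mat N N (\<lambda>(r,s). block_moment q p mup mum (r+b) (s+a)))"
    "s < dim_col (mat N N (\<lambda>(r,s). block_moment q p mup mum (r+b) (s+a)))"
  then have r: "r < N" and s: "s < N" by auto
  let ?c = "(r+b) mod q" and ?d = "(s+a) mod p"
  let ?x = "\<lambda>k l x. (if k = ?c then x ^ ((r+b) div q) else 0) * (if l = ?d then x ^ ((s+a) div p) else 0)"
  have "moment_mat q p mup mum N N b a $$ (r,s) = (\<Sum>k<q. \<Sum>l<p. mint mup mum k l (?x k l))"
    using q p r s by (simp add: moment_mat_def Xmon_mult_Xfr_power_index)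
  also have "\<dots> = (\<Sum>l<p. mint mup mum ?c l (?x ?c l))"
    using q by (intro sum_lessThan_eq_single) (auto simp: mint_def)
  also have "\<dots> = mint mup mum ?c ?d (?x ?c ?d)"
    using p by (intro sum_lessThan_eq_single) (auto simp: mint_def)
  finally show "moment_mat q p mup mum N N b a $$ (r,s)
      = mat N N (\<lambda>(r,s). block_moment q p mup mum (r+b) (s+a)) $$ (r,s)"
    using r s by (simp add: block_moment_def)
qed (simp_all add: moment_mat_def)

lemma Xmon_zero_index:
  assumes "i < M" "j < r"
  shows "Xmon r M 0 $$ (i,j) = (if i = j then 1 else 0)"
proof (cases "i < r")
  case False
  then have "i div r \<noteq> 0" using assms(2) by (simp add: div_eq_0_iff)
  then show ?thesis using False assms by (simp add: Xmon_def)
qed (use assms in \<open>auto simp: Xmon_def\<close>)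

lemma tauB_eq_L_block:
  assumes L: "L \<in> carrier_mat N N" and b: "b \<le> q" and nb: "n + b \<le> N"
  shows "tauB q N L b n = det (mat b b (\<lambda>(i,j). L $$ (n+i, j)))"
proof -
  have "Bmat q N L 0 $$ (n+i, j) = L $$ (n+i, j)" if "i < b" "j < b" for i j
  proof -
    have X: "Xmon q N 0 \<in> carrier_mat N q" by (simp add: Xmon_def)
    have "Bmat q N L 0 $$ (n+i, j) = (\<Sum>t<N. L $$ (n+i, t) * Xmon q N 0 $$ (t,j))"
      unfolding Bmat_def using index_mult_mat_sum[OF L X] that b nb by simp
    also have "\<dots> = L $$ (n+i, j)"
      using that b nb by (subst sum_lessThan_eq_single[of j]) (auto simp: Xmon_zero_index)
    finally show ?thesis .
  qed
  then show ?thesis unfolding tauB_def by (intro arg_cong[where f = det] eq_matI) auto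
qed

definition reverse_perm :: "nat \<Rightarrow> nat \<Rightarrow> nat" where
  "reverse_perm a i = (if i < a then a - 1 - i else i)"

lemma reverse_perm_permutes: "reverse_perm a permutes {0..<a}"
proof -
  have "inj_on (reverse_perm a) {0..<a}" unfolding reverse_perm_def inj_on_def by auto
  moreover have "reverse_perm a ` {0..<a} = {0..<a}"
    using calculation by (intro endo_inj_surj) (auto simp: reverse_perm_def)
  ultimately show ?thesis
    by (intro bij_imp_permutes) (auto simp: bij_betw_def reverse_perm_def)
qed

lemma det_reverse_cols:
  fixes A :: "'a :: comm_ring_1 mat"
  assumes A: "A \<in> carrier_mat a a"
  shows "det (mat a a (\<lambda>(i,j). A $$ (i, a - 1 - j))) = signof (reverse_perm a) * det A"
proof -
  have "det (mat a a (\<lambda>(i,j). A $$ (i, a - 1 - j)))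
      = det (mat a a (\<lambda>(i,j). transpose_mat A $$ (reverse_perm a i, j)))"
    using A by (subst det_transpose[symmetric])
      (auto intro!: arg_cong[where f = det] simp: reverse_perm_def)
  also have "\<dots> = signof (reverse_perm a) * det A"
    using A by (simp add: det_permute_rows[OF _ reverse_perm_permutes] det_transpose)
  finally show ?thesis .
qed

lemma tauA_eq_U_block:
  assumes U: "U \<in> carrier_mat N N" and a: "a \<le> p" and na: "n + a \<le> N"
  shows "tauA p N U a n = signof (reverse_perm a) * det (mat a a (\<lambda>(i,j). U $$ (i, n+j)))"
proof -
  have entry: "Amat p N U 0 $$ (i, n+j) = U $$ (i, n+j)" if "i < a" "j < a" for i j
  proof -
    have X: "transpose_mat (Xmon p N 0) \<in> carrier_mat p N" by (simp add: Xmon_def)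
    have "Amat p N U 0 $$ (i, n+j) = (\<Sum>t<N. Xmon p N 0 $$ (t,i) * U $$ (t, n+j))"
      unfolding Amat_def using index_mult_mat_sum[OF X U] that a na by (simp add: Xmon_def)
    also have "\<dots> = U $$ (i, n+j)"
      using that a na by (subst sum_lessThan_eq_single[of i]) (auto simp: Xmon_zero_index)
    finally show ?thesis .
  qed
  let ?B = "mat a a (\<lambda>(i,j). U $$ (i, n+j))"
  have "mat a a (\<lambda>(i,j). Amat p N U 0 $$ (i, n + a - 1 - j)) = mat a a (\<lambda>(i,j). ?B $$ (i, a - 1 - j))"
  proof (rule eq_matI)
    fix i j assume "i < dim_row (mat a a (\<lambda>(i,j). ?B $$ (i, a - 1 - j)))"
      "j < dim_col (mat a a (\<lambda>(i,j). ?B $$ (i, a - 1 - j)))"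
    then have i: "i < a" and j: "j < a" by auto
    then have "n + a - 1 - j = n + (a - 1 - j)" by simp
    then show "mat a a (\<lambda>(i,j). Amat p N U 0 $$ (i, n + a - 1 - j)) $$ (i,j)
        = mat a a (\<lambda>(i,j). ?B $$ (i, a - 1 - j)) $$ (i,j)"
      using entry[OF i, of "a - 1 - j"] i j by simp
  qed auto
  then show ?thesis
    unfolding tauA_def using det_reverse_cols[OF mat_carrier[of a a "\<lambda>(i,j). U $$ (i, n+j)"]] by simp
qed

section \<open>Entries of the bidiagonal factors\<close>

lemma gauss_borel_col_shift_subdiag:
  fixes g :: "nat \<Rightarrow> nat \<Rightarrow> real"
  assumes gb: "gauss_borel N (mat N N (\<lambda>(i,j). g i j)) L U"
    and gb': "gauss_borel N (mat N N (\<lambda>(i,j). g i (Suc j))) L' U'" and n: "Suc n < N"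
  shows "(L * minv L') $$ (Suc n, n) = U' $$ (n,n) / U $$ (Suc n, Suc n)"
proof -
  let ?M' = "mat N N (\<lambda>(i,j). g i (Suc j))"
  note L = gauss_borel_L[OF gb] and U' = gauss_borel_U[OF gb']
  note V = gauss_borel_minv_U[OF gb]
  have shift: "(L * ?M') $$ (Suc n, t) = minv U $$ (Suc n, Suc t)" if "Suc t < N" for t
    using index_mult_mat_sum[OF L(1) mat_carrier[of N N "\<lambda>(i,j). g i j"], where i="Suc n" and j="Suc t"]
      index_mult_mat_sum[OF L(1) mat_carrier[of N N "\<lambda>(i,j). g i (Suc j)"], where i="Suc n" and j=t]
      gauss_borel_M(2)[OF gb] n that by simp
  have "L * minv L' = L * ?M' * U'"
    using assoc_mult_mat[OF L(1) mat_carrier[of N N "\<lambda>(i,j). g i (Suc j)"] U'(1)]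
      gauss_borel_M(3)[OF gb'] by simp
  then have "(L * minv L') $$ (Suc n, n) = (\<Sum>t<N. (L * ?M') $$ (Suc n, t) * U' $$ (t,n))"
    using index_mult_mat_sum[OF mult_carrier_mat[OF L(1) mat_carrier] U'(1) n] n by simp
  also have "\<dots> = minv U $$ (Suc n, Suc n) * U' $$ (n,n)"
  proof (subst sum_lessThan_eq_single[of n])
    fix t assume t: "t < N" "t \<noteq> n"
    show "(L * ?M') $$ (Suc n, t) * U' $$ (t,n) = 0"
    proof (cases "t < n")
      case True
      then show ?thesis using shift[of t] upper_triangularD[OF V(2), of "Suc t" "Suc n"] V(1) n by simp
    next
      case False
      then show ?thesis using upper_triangularD[OF U'(2), of n t] U'(1) t by simp
    qed
  qed (use n shift in simp_all)
  finally show ?thesis using V(3) n by simp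
qed

lemma U_factor_diag_eq_tauB:
  fixes g :: "nat \<Rightarrow> nat \<Rightarrow> real"
  assumes gb: "gauss_borel N (mat N N (\<lambda>(i,j). g i j)) L U"
    and gbc: "gauss_borel N (mat N N (\<lambda>(i,j). g (i+c) j)) Lc Uc"
    and gbb: "gauss_borel N (mat N N (\<lambda>(i,j). g (i + Suc c) j)) Lb Ub"
    and q: "Suc c \<le> q" and n: "n + Suc c < N"
  shows "(minv Ub * Uc) $$ (n,n)
    = - (tauB q N L c n * tauB q N L (Suc c) (n+1)) / (tauB q N L c (n+1) * tauB q N L (Suc c) n)"
proof -
  define D where "D b k = det (mat k k (\<lambda>(i,j). g (i+b) j))" for b k
  have tau: "tauB q N L b m = (-1)^(m*b) * D b m / D 0 m" if "b \<le> Suc c" "m + b \<le> N" for b m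
    using tauB_eq_L_block[OF gauss_borel_L(1)[OF gb]] gauss_borel_L_block_minor[OF gb] that q
    by (simp add: D_def)
  have minor_nonzero: "D b k \<noteq> 0"
    if "gauss_borel N (mat N N (\<lambda>(i,j). g (i+b) j)) L\<^sub>b U\<^sub>b" "k \<le> N" for b k L\<^sub>b U\<^sub>b
    using gauss_borel_leading_minor_nonzero[OF that] that(2) by (simp add: D_def leading_submatrix_mat)
  have diag: "U\<^sub>b $$ (n,n) = D b n / D b (Suc n)"
    if "gauss_borel N (mat N N (\<lambda>(i,j). g (i+b) j)) L\<^sub>b U\<^sub>b" for b L\<^sub>b U\<^sub>b
    using gauss_borel_diag[OF that, of n] n by (simp add: D_def leading_submatrix_mat)
  have gb0: "gauss_borel N (mat N N (\<lambda>(i,j). g (i+0) j)) L U" using gb by simp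
  note Vb = gauss_borel_minv_U[OF gbb] and Uc = gauss_borel_U[OF gbc]
  have "(minv Ub * Uc) $$ (n,n) = Uc $$ (n,n) / Ub $$ (n,n)"
    using upper_triangular_mult_diag[OF Vb(1,2) Uc(1,2)] Vb(3) n by simp
  also have "\<dots> = (D c n / D c (Suc n)) / (D (Suc c) n / D (Suc c) (Suc n))"
    using diag[OF gbc] diag[OF gbb] by simp
  also have "\<dots> = - (tauB q N L c n * tauB q N L (Suc c) (n+1)) /
      (tauB q N L c (n+1) * tauB q N L (Suc c) n)"
    using n minor_nonzero[OF gb0] minor_nonzero[OF gbc] minor_nonzero[OF gbb]
    by (simp add: tau field_simps power_add)
  finally show ?thesis .
qed

lemma L_factor_subdiag_eq_tauA:
  fixes g :: "nat \<Rightarrow> nat \<Rightarrow> real"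
  assumes gb: "gauss_borel N (mat N N (\<lambda>(i,j). g i j)) L U"
    and gbc: "gauss_borel N (mat N N (\<lambda>(i,j). g i (j+c))) Lc Uc"
    and gba: "gauss_borel N (mat N N (\<lambda>(i,j). g i (j + Suc c))) La Ua"
    and p: "Suc c \<le> p" and n: "n + Suc c < N"
  shows "(Lc * minv La) $$ (n+1, n)
    = - (tauA p N U c (n+2) * tauA p N U (Suc c) n) / (tauA p N U c (n+1) * tauA p N U (Suc c) (n+1))"
proof -
  define D where "D a k = det (mat k k (\<lambda>(i,j). g i (j+a)))" for a k
  define \<sigma> where "\<sigma> a = (signof (reverse_perm a) :: real)" for a
  have tau: "tauA p N U a m = \<sigma> a * ((-1)^(a*m) * D a m / D 0 (m+a))"
    if "a \<le> Suc c" "m + a \<le> N" for a m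
    using tauA_eq_U_block[OF gauss_borel_U(1)[OF gb]] gauss_borel_U_block_minor[OF gb] that p
    by (simp add: D_def \<sigma>_def)
  have \<sigma>_nonzero: "\<sigma> a \<noteq> 0" for a by (simp add: \<sigma>_def)
  have minor_nonzero: "D a k \<noteq> 0"
    if "gauss_borel N (mat N N (\<lambda>(i,j). g i (j+a))) L\<^sub>a U\<^sub>a" "k \<le> N" for a k L\<^sub>a U\<^sub>a
    using gauss_borel_leading_minor_nonzero[OF that] that(2) by (simp add: D_def leading_submatrix_mat)
  have diag: "U\<^sub>a $$ (m,m) = D a m / D a (Suc m)"
    if "gauss_borel N (mat N N (\<lambda>(i,j). g i (j+a))) L\<^sub>a U\<^sub>a" "m < N" for a m L\<^sub>a U\<^sub>a
    using gauss_borel_diag[OF that] that(2) by (simp add: D_def leading_submatrix_mat)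
  have gb0: "gauss_borel N (mat N N (\<lambda>(i,j). g i (j+0))) L U" using gb by simp
  have "gauss_borel N (mat N N (\<lambda>(i,j). g i (Suc j + c))) La Ua" using gba by simp
  then have "(Lc * minv La) $$ (Suc n, n) = Ua $$ (n,n) / Uc $$ (Suc n, Suc n)"
    using gauss_borel_col_shift_subdiag[of N "\<lambda>i j. g i (j + c)"] gbc n by simp
  also have "\<dots> = (D (Suc c) n / D (Suc c) (Suc n)) / (D c (Suc n) / D c (Suc (Suc n)))"
    using diag[OF gbc, of "Suc n"] diag[OF gba, of n] n by simp
  also have "\<dots> = - (tauA p N U c (n+2) * tauA p N U (Suc c) n) /
      (tauA p N U c (n+1) * tauA p N U (Suc c) (n+1))"
    using n \<sigma>_nonzero minor_nonzero[OF gb0] minor_nonzero[OF gbc] minor_nonzero[OF gba]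
    by (simp add: tau field_simps power_add)
  finally show ?thesis by simp
qed

theorem mainTheorem1:
  fixes q p N :: nat
    and mup mum :: "nat \<Rightarrow> nat \<Rightarrow> real measure"
    and Lc Uc :: "nat \<Rightarrow> nat \<Rightarrow> real mat"
  assumes "q \<ge> 1" and "p \<ge> 1"
    and "signed_measure_matrix q p mup mum"
    and "gauss_borel N (moment_mat q p mup mum N N 0 0) (Lc 0 0) (Uc 0 0)"
    and "\<forall>b\<in>{1..q}. gauss_borel N (moment_mat q p mup mum N N b 0) (Lc b 0) (Uc b 0)"
    and "\<forall>a\<in>{1..p}. gauss_borel N (moment_mat q p mup mum N N 0 a) (Lc 0 a) (Uc 0 a)"
  shows "(\<forall>b\<in>{1..q}. \<forall>n < N - b.
            (minv (Uc b 0) * Uc (b - 1) 0) $$ (n, n) =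
              - (tauB q N (Lc 0 0) (b - 1) n * tauB q N (Lc 0 0) b (n + 1)) /
                (tauB q N (Lc 0 0) (b - 1) (n + 1) * tauB q N (Lc 0 0) b n))
       \<and> (\<forall>a\<in>{1..p}. \<forall>n < N - a.
            (Lc 0 (a - 1) * minv (Lc 0 a)) $$ (n + 1, n) =
              - (tauA p N (Uc 0 0) (a - 1) (n + 2) * tauA p N (Uc 0 0) a n) /
                (tauA p N (Uc 0 0) (a - 1) (n + 1) * tauA p N (Uc 0 0) a (n + 1)))"
proof -
  let ?G = "block_moment q p mup mum"
  have row_shift: "gauss_borel N (mat N N (\<lambda>(i,j). ?G (i+b) j)) (Lc b 0) (Uc b 0)" if "b \<le> q" for b
  proof (cases "b = 0")
    case False
    with that have "b \<in> {1..q}" by simp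
    with assms(5) show ?thesis by (simp add: moment_mat_eq_block_moment[OF assms(1,2)])
  qed (use assms(4) in \<open>simp add: moment_mat_eq_block_moment[OF assms(1,2)]\<close>)
  have col_shift: "gauss_borel N (mat N N (\<lambda>(i,j). ?G i (j+a))) (Lc 0 a) (Uc 0 a)" if "a \<le> p" for a
  proof (cases "a = 0")
    case False
    with that have "a \<in> {1..p}" by simp
    with assms(6) show ?thesis by (simp add: moment_mat_eq_block_moment[OF assms(1,2)])
  qed (use assms(4) in \<open>simp add: moment_mat_eq_block_moment[OF assms(1,2)]\<close>)
  have base: "gauss_borel N (mat N N (\<lambda>(i,j). ?G i j)) (Lc 0 0) (Uc 0 0)"
    using row_shift[of 0] by simp
  show ?thesis
  proof (intro conjI ballI allI impI, goal_cases)
    case (1 b n)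
    then obtain c where b: "b = Suc c" and c: "Suc c \<le> q" "n + Suc c < N" by (cases b) auto
    show ?case
      using U_factor_diag_eq_tauB[OF base row_shift[of c] row_shift[OF c(1)] c] c(1) b by simp
  next
    case (2 a n)
    then obtain c where a: "a = Suc c" and c: "Suc c \<le> p" "n + Suc c < N" by (cases a) auto
    show ?case
      using L_factor_subdiag_eq_tauA[OF base col_shift[of c] col_shift[OF c(1)] c] c(1) a by simp
  qed
qed

end
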